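(* Let $k\ge 0$ and $s,g_1,b_2>0$ be integers with $k\le g_1\le b_2$. Then $$t^kA_s=\lambda_1t^kA_{z_1}+\lambda_2t^{g_1}A_{z_2}+t^{b_2}A_{z_3},$$ a partition into summands with pairwise disjoint sets of monomials, where $A_{z_i}\in\mathbb{Z}[t]$ and: $z_1=g_1-k$, $\lambda_1=\epsilon_{g_1+k+s}$ when $g_1\le k+s$; $z_1=s$, $\lambda_1=1$ when $k+s\le g_1$; $z_2=b_2-g_1$, $\lambda_2=\epsilon_{b_2+k+s}$ when $b_2\le k+s$; $z_2=k+s-g_1$, $\lambda_2=1$ when $g_1\le k+s\le b_2$; $z_2=0$, $\lambda_2=1$ when $k+s\le g_1$; $z_3=k+s-b_2$ when $k+s\ge b_2$; $z_3=0$ when $k+s\le b_2$.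
   Context: $\epsilon_x=(-1)^x$. For an integer $w$, $A_w=(t^w+\epsilon_{w-1})/(t+1)$; for $w>0$, $A_w=\sum_{j=0}^{w-1}\epsilon_jt^{w-1-j}$, and $A_0=0$. *)

theory Defs
  imports "HOL-Computational_Algebra.Polynomial"
begin

definition eps :: "nat \<Rightarrow> int" where
  "eps x = (-1) ^ x"

definition A :: "nat \<Rightarrow> int poly" where
  "A w = (\<Sum>j<w. monom (eps j) (w - 1 - j))"

definition mono_set :: "int poly \<Rightarrow> nat set" where
  "mono_set p = {i. coeff p i \<noteq> 0}"

end

theory Submission
  imports Defs
begin

text \<open>The coefficient of \<open>t\<^sup>d\<close> in \<open>A\<^sub>w\<close> is \<open>\<epsilon>\<^sub>w\<^sub>-\<^sub>1\<^sub>-\<^sub>d\<close>, so splitting off the top \<open>m\<close>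
  coefficients gives \<open>A\<^sub>m\<^sub>+\<^sub>n = t\<^sup>n A\<^sub>m + \<epsilon>\<^sub>m A\<^sub>n\<close>. Applied twice, this cuts the window of
  exponents \<open>[k, k + s)\<close> of \<open>t\<^sup>k A\<^sub>s\<close> at \<open>g\<^sub>1\<close> and \<open>b\<^sub>2\<close> (clamped to \<open>k + s\<close>) into three
  windows; the signs produced, \<open>\<epsilon>\<^sub>k\<^sub>+\<^sub>s\<^sub>-\<^sub>g\<^sub>1\<close> and \<open>\<epsilon>\<^sub>k\<^sub>+\<^sub>s\<^sub>-\<^sub>b\<^sub>2\<close>, equal \<open>\<lambda>\<^sub>1\<close> and
  \<open>\<lambda>\<^sub>2\<close> by parity, and pieces living on disjoint windows have disjoint monomials.\<close>

lemma eps_cong_parity: "even a = even b \<Longrightarrow> eps a = eps b"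
  by (simp add: eps_def minus_one_power_iff)

lemma A_0 [simp]: "A 0 = 0"
  by (simp add: A_def)

lemma coeff_A: "coeff (A w) d = (if d < w then eps (w - 1 - d) else 0)"
proof -
  have "coeff (A w) d = (\<Sum>j<w. if j = w - 1 - d \<and> d < w then eps j else 0)"
    unfolding A_def coeff_sum coeff_monom by (rule sum.cong) auto
  also have "\<dots> = (if d < w then eps (w - 1 - d) else 0)"
    by (cases "d < w") (auto simp: sum.delta)
  finally show ?thesis .
qed

lemma A_add: "A (m + n) = monom 1 n * A m + smult (eps m) (A n)"
proof (rule poly_eqI)
  fix d
  have "d < n \<Longrightarrow> eps (m + n - 1 - d) = eps m * eps (n - 1 - d)"
    by (simp add: eps_def flip: power_add)
  then show "coeff (A (m + n)) d = coeff (monom 1 n * A m + smult (eps m) (A n)) d"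
    by (auto simp: coeff_A coeff_monom_mult)
qed

lemma monom_mult_A_split3:
  assumes "k \<le> g" "g \<le> b" "b \<le> k + s"
  shows "monom 1 k * A s
           = smult (eps (k + s - g)) (monom 1 k * A (g - k))
             + smult (eps (k + s - b)) (monom 1 g * A (b - g)) + monom 1 b * A (k + s - b)"
proof -
  have gap: "b - g + (g - k) = b - k"
    using assms by simp
  have "A s = A ((k + s - b) + ((b - g) + (g - k)))"
    using assms by simp
  also have "\<dots> = monom 1 (b - k) * A (k + s - b)
      + smult (eps (k + s - b)) (monom 1 (g - k) * A (b - g) + smult (eps (b - g)) (A (g - k)))"
    unfolding A_add[of "k + s - b"] A_add[of "b - g" "g - k"]
    by (simp only: gap)
  finally have "A s = monom 1 (b - k) * A (k + s - b)
      + smult (eps (k + s - b)) (monom 1 (g - k) * A (b - g))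
      + smult (eps (k + s - b) * eps (b - g)) (A (g - k))"
    by (simp add: smult_add_right)
  moreover have "eps (k + s - b) * eps (b - g) = eps (k + s - g)"
    using assms by (simp add: eps_def flip: power_add)
  moreover have "monom 1 k * monom 1 (b - k) = (monom 1 b :: int poly)"
    and "monom 1 k * monom 1 (g - k) = (monom 1 g :: int poly)"
    using assms by (simp_all add: mult_monom)
  ultimately show ?thesis
    by (simp add: distrib_left add_ac flip: mult.assoc)
qed

lemma mono_set_smult_subset: "mono_set (smult c p) \<subseteq> mono_set p"
  by (auto simp: mono_set_def)

lemma mono_set_monom_mult_A: "mono_set (monom 1 a * A w) \<subseteq> {a..<a + w}"
  by (auto simp: mono_set_def coeff_monom_mult coeff_A split: if_splits)

theorem proposition2p12:
  fixes k s g1 b2 z1 z2 z3 :: nat and l1 l2 :: int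
  assumes "s > 0" "g1 > 0" "b2 > 0" "k \<le> g1" "g1 \<le> b2"
    and "g1 \<le> k + s \<Longrightarrow> z1 = g1 - k \<and> l1 = eps (g1 + k + s)"
    and "k + s \<le> g1 \<Longrightarrow> z1 = s \<and> l1 = 1"
    and "b2 \<le> k + s \<Longrightarrow> z2 = b2 - g1 \<and> l2 = eps (b2 + k + s)"
    and "g1 \<le> k + s \<Longrightarrow> k + s \<le> b2 \<Longrightarrow> z2 = k + s - g1 \<and> l2 = 1"
    and "k + s \<le> g1 \<Longrightarrow> z2 = 0 \<and> l2 = 1"
    and "b2 \<le> k + s \<Longrightarrow> z3 = k + s - b2"
    and "k + s \<le> b2 \<Longrightarrow> z3 = 0"
  shows "monom 1 k * A s
           = smult l1 (monom 1 k * A z1) + smult l2 (monom 1 g1 * A z2) + monom 1 b2 * A z3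
       \<and> mono_set (smult l1 (monom 1 k * A z1)) \<inter> mono_set (smult l2 (monom 1 g1 * A z2)) = {}
       \<and> mono_set (smult l1 (monom 1 k * A z1)) \<inter> mono_set (monom 1 b2 * A z3) = {}
       \<and> mono_set (smult l2 (monom 1 g1 * A z2)) \<inter> mono_set (monom 1 b2 * A z3) = {}"
proof -
  have split: "monom 1 k * A s
      = smult l1 (monom 1 k * A z1) + smult l2 (monom 1 g1 * A z2) + monom 1 b2 * A z3"
  proof (cases "k + s \<le> g1")
    case True
    with assms show ?thesis by simp
  next
    case False
    then have l1: "z1 = g1 - k" "l1 = eps (k + s - g1)"
      using assms(6) by (auto intro: eps_cong_parity)
    show ?thesis
    proof (cases "b2 \<le> k + s")
      case True
      then have "z2 = b2 - g1" "l2 = eps (k + s - b2)" "z3 = k + s - b2"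
        using assms(8,11) by (auto intro: eps_cong_parity)
      with l1 True show ?thesis
        using monom_mult_A_split3[of k g1 b2 s] assms(4,5) by simp
    next
      case b2_large: False
      then have "z2 = k + s - g1" "l2 = 1" "z3 = 0"
        using False assms(9,12) by auto
      with l1 show ?thesis
        using monom_mult_A_split3[of k g1 "k + s" s] assms(4) False by (simp add: eps_def)
    qed
  qed
  have "k + z1 \<le> g1" and "g1 + z2 \<le> b2"
    using assms(4-10) by (cases "k + s \<le> g1"; cases "b2 \<le> k + s"; force)+
  then have "mono_set (smult l1 (monom 1 k * A z1)) \<subseteq> {..<g1}"
    and "mono_set (smult l2 (monom 1 g1 * A z2)) \<subseteq> {g1..<b2}"
    and "mono_set (monom 1 b2 * A z3) \<subseteq> {b2..}"
    using mono_set_smult_subset mono_set_monom_mult_A by fastforce+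
  with split \<open>g1 \<le> b2\<close> show ?thesis
    by (fastforce dest: subsetD)
qed

end
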